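(* Let $\mathbb{K}\in\{\mathbb{R},\mathbb{C}\}$, let $\mathbf{R}_U\in\mathbb{K}^{n\times n}$ be self-adjoint positive definite, and equip $U:=\mathbb{K}^n$ with $\langle \mathbf{x},\mathbf{y}\rangle_U:=\langle \mathbf{R}_U\mathbf{x},\mathbf{y}\rangle$. Fix $\mu$, $\mathbf{A}(\mu)\in\mathbb{K}^{n\times n}$, $\mathbf{u}(\mu)\in U$, and a subspace $U_r\subseteq U$ of dimension $r$ with a basis matrix $\mathbf{U}_r\in\mathbb{K}^{n\times r}$ (columns forming a basis of $U_r$). Define $\|\mathbf{y}\|_{U_r'}:=\max_{\mathbf{w}\in U_r\setminus\{\mathbf{0}\}}|\langle\mathbf{y},\mathbf{w}\rangle|/\|\mathbf{w}\|_U$, $\alpha_r(\mu):=\min_{\mathbf{x}\in U_r\setminus\{\mathbf{0}\}}\|\mathbf{A}(\mu)\mathbf{x}\|_{U_r'}/\|\mathbf{x}\|_U$ and $\beta_r(\mu):=\max_{\mathbf{x}\in(\mathrm{span}\{\mathbf{u}(\mu)\}+U_r)\setminus\{\mathbf{0}\}}\|\mathbf{A}(\mu)\mathbf{x}\|_{U_r'}/\|\mathbf{x}\|_U$. If the columns of $\mathbf{U}_r$ are orthonormal with respect to $\langle\cdot,\cdot\rangle_U$, then the condition number of $\mathbf{A}_r(\mu):=\mathbf{U}_r^{\mathrm{H}}\mathbf{A}(\mu)\mathbf{U}_r\in\mathbb{K}^{r\times r}$ is bounded by $\beta_r(\mu)/\alpha_r(\mu)$.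
   Context: $\langle\mathbf{x},\mathbf{y}\rangle=\mathbf{x}^{\mathrm{H}}\mathbf{y}$ is the canonical inner product; $\|\cdot\|_U$ is the norm induced by $\langle\cdot,\cdot\rangle_U$. The condition number of a square matrix is the ratio of its largest to smallest singular value (with respect to the Euclidean norm). *)

theory Defs
  imports "HOL-Analysis.Analysis"
begin

text \<open>Everything is parametrised by the field conjugation cj of the scalar field K:
  cj = cnj for K = complex, cj = id for K = real.\<close>

definition hinner :: "('k::real_normed_field \<Rightarrow> 'k) \<Rightarrow> 'k^'n \<Rightarrow> 'k^'n \<Rightarrow> 'k" where
  "hinner cj x y = (\<Sum>i\<in>UNIV. cj (x$i) * y$i)"

definition hadj :: "('k::real_normed_field \<Rightarrow> 'k) \<Rightarrow> 'k^'c^'r \<Rightarrow> 'k^'r^'c" where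
  "hadj cj M = (\<chi> i j. cj (M$j$i))"

definition self_adjoint_pd :: "('k::real_normed_field \<Rightarrow> 'k) \<Rightarrow> 'k^'n^'n \<Rightarrow> bool" where
  "self_adjoint_pd cj R \<longleftrightarrow> hadj cj R = R \<and>
     (\<forall>x. x \<noteq> 0 \<longrightarrow> (\<exists>t::real. t > 0 \<and> hinner cj (R *v x) x = of_real t))"

definition innerU :: "('k::real_normed_field \<Rightarrow> 'k) \<Rightarrow> 'k^'n^'n \<Rightarrow> 'k^'n \<Rightarrow> 'k^'n \<Rightarrow> 'k" where
  "innerU cj R x y = hinner cj (R *v x) y"

definition normU :: "('k::real_normed_field \<Rightarrow> 'k) \<Rightarrow> 'k^'n^'n \<Rightarrow> 'k^'n \<Rightarrow> real" where
  "normU cj R x = sqrt (norm (innerU cj R x x))"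

definition col_space :: "'k::real_normed_field^'r^'n \<Rightarrow> ('k^'n) set" where
  "col_space Ur = range (\<lambda>c. Ur *v c)"

definition dual_norm :: "('k::real_normed_field \<Rightarrow> 'k) \<Rightarrow> 'k^'n^'n \<Rightarrow> 'k^'r^'n \<Rightarrow> 'k^'n \<Rightarrow> real" where
  "dual_norm cj R Ur y =
     Sup {norm (hinner cj y w) / normU cj R w | w. w \<in> col_space Ur \<and> w \<noteq> 0}"

definition alpha_r :: "('k::real_normed_field \<Rightarrow> 'k) \<Rightarrow> 'k^'n^'n \<Rightarrow> 'k^'r^'n \<Rightarrow> 'k^'n^'n \<Rightarrow> real" where
  "alpha_r cj R Ur A =
     Inf {dual_norm cj R Ur (A *v x) / normU cj R x | x. x \<in> col_space Ur \<and> x \<noteq> 0}"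

definition beta_r :: "('k::real_normed_field \<Rightarrow> 'k) \<Rightarrow> 'k^'n^'n \<Rightarrow> 'k^'r^'n \<Rightarrow> 'k^'n^'n \<Rightarrow> 'k^'n \<Rightarrow> real" where
  "beta_r cj R Ur A u =
     Sup {dual_norm cj R Ur (A *v x) / normU cj R x | x.
            x \<in> {t *s u + w | t w. w \<in> col_space Ur} \<and> x \<noteq> 0}"

text \<open>Largest / smallest singular value of a square matrix (Euclidean norm on vectors;
  the norm of type 'k^'r is the Euclidean norm), and the condition number.\<close>
definition sigma_max :: "'k::real_normed_field^'r^'r \<Rightarrow> real" where
  "sigma_max M = Sup {norm (M *v x) / norm x | x. x \<noteq> 0}"

definition sigma_min :: "'k::real_normed_field^'r^'r \<Rightarrow> real" where
  "sigma_min M = Inf {norm (M *v x) / norm x | x. x \<noteq> 0}"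

definition cond_number :: "'k::real_normed_field^'r^'r \<Rightarrow> real" where
  "cond_number M = sigma_max M / sigma_min M"

end

theory Submission
  imports Defs
begin

text \<open>Since the columns of \<open>Ur\<close> are \<open>U\<close>-orthonormal, \<open>c \<mapsto> Ur c\<close> is an isometry from
  \<open>(K^r, \<parallel>\<cdot>\<parallel>)\<close> onto \<open>(U_r, \<parallel>\<cdot>\<parallel>_U)\<close>, and the dual norm on \<open>U_r\<close> becomes
  \<open>\<parallel>y\<parallel>_{U_r'} = \<parallel>Ur\<^sup>H y\<parallel>\<close>. Hence \<open>\<parallel>A x\<parallel>_{U_r'} / \<parallel>x\<parallel>_U = \<parallel>A_r c\<parallel> / \<parallel>c\<parallel>\<close> for \<open>x = Ur c\<close>,
  so \<open>\<alpha>_r\<close> is exactly the smallest singular value of \<open>A_r\<close>, while the largest one is a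
  supremum over the smaller set \<open>U_r \<subseteq> span {u} + U_r\<close> and thus at most \<open>\<beta>_r\<close>.
  The supremum defining \<open>\<beta>_r\<close> is finite because \<open>\<parallel>\<cdot>\<parallel>_U\<close> dominates a multiple of the
  Euclidean norm (positive definiteness and compactness of the unit sphere).\<close>

lemma sigma_min_nonneg: "0 \<le> sigma_min (M :: 'k::real_normed_field^'r^'r)"
proof -
  have "(1::'k^'r) \<noteq> 0"
    by (simp add: vec_eq_iff)
  then show ?thesis
    unfolding sigma_min_def by (intro cInf_greatest) (auto intro: exI[of _ 1])
qed

lemma normU_0 [simp]: "normU cj R 0 = 0"
  by (simp add: normU_def innerU_def hinner_def)

locale conjugation =
  fixes cj :: "'k::{real_normed_field,euclidean_space} \<Rightarrow> 'k"
  assumes cj_add: "cj (a + b) = cj a + cj b"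
    and cj_mult: "cj (a * b) = cj a * cj b"
    and cj_cj [simp]: "cj (cj a) = a"
    and norm_cj [simp]: "norm (cj a) = norm a"
    and cj_mult_self: "cj a * a = of_real ((norm a)\<^sup>2)"
begin

lemma cj_0 [simp]: "cj 0 = 0"
  using cj_add[of 0 0] by simp

lemma cj_1 [simp]: "cj 1 = 1"
  using cj_mult_self[of 1] by simp

lemma cj_diff: "cj (a - b) = cj a - cj b"
  using cj_add[of "a - b" b] by simp

lemma cj_sum: "cj (sum f S) = (\<Sum>i\<in>S. cj (f i))"
  by (induction S rule: infinite_finite_induct) (auto simp: cj_add)

lemma continuous_on_cj: "continuous_on S cj"
  unfolding continuous_on_iff dist_norm by (metis cj_diff norm_cj)

lemma hinner_self: "hinner cj x x = of_real ((norm x)\<^sup>2)"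
proof -
  have "hinner cj x x = of_real (\<Sum>i\<in>UNIV. (norm (x$i))\<^sup>2)"
    by (simp add: hinner_def cj_mult_self)
  also have "(\<Sum>i\<in>UNIV. (norm (x$i))\<^sup>2) = (norm x)\<^sup>2"
    by (simp add: norm_vec_def L2_set_def sum_nonneg)
  finally show ?thesis .
qed

lemma norm_hinner_le: "norm (hinner cj x y) \<le> norm x * norm y"
proof -
  have "norm (hinner cj x y) \<le> (\<Sum>i\<in>UNIV. norm (x$i) * norm (y$i))"
    unfolding hinner_def by (rule order_trans[OF norm_sum]) (simp add: norm_mult)
  also have "\<dots> = (\<chi> i. norm (x$i)) \<bullet> (\<chi> i. norm (y$i))"
    by (simp add: inner_vec_def)
  also have "\<dots> \<le> norm (\<chi> i. norm (x$i)) * norm (\<chi> i. norm (y$i))"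
    by (rule norm_cauchy_schwarz)
  also have "\<dots> = norm x * norm y"
    by (simp add: norm_vec_def)
  finally show ?thesis .
qed

lemma hinner_smult: "hinner cj (a *s x) (a *s y) = of_real ((norm a)\<^sup>2) * hinner cj x y"
proof -
  have "hinner cj (a *s x) (a *s y) = (\<Sum>i\<in>UNIV. (cj a * a) * (cj (x$i) * y$i))"
    by (simp add: hinner_def cj_mult mult_ac)
  then show ?thesis
    by (simp add: hinner_def cj_mult_self sum_distrib_left)
qed

lemma hinner_matrix_right: "hinner cj y (M *v c) = hinner cj (hadj cj M *v y) c"
proof -
  have "hinner cj y (M *v c) = (\<Sum>i\<in>UNIV. \<Sum>j\<in>UNIV. cj (y$i) * (M$i$j * c$j))"
    by (simp add: hinner_def matrix_vector_mult_def sum_distrib_left)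
  also have "\<dots> = (\<Sum>j\<in>UNIV. \<Sum>i\<in>UNIV. cj (y$i) * (M$i$j * c$j))"
    by (rule sum.swap)
  also have "\<dots> = hinner cj (hadj cj M *v y) c"
    by (simp add: hinner_def matrix_vector_mult_def hadj_def cj_sum cj_mult
        sum_distrib_left sum_distrib_right mult_ac)
  finally show ?thesis .
qed

lemma Sup_norm_hinner_ratio: "Sup {norm (hinner cj v c) / norm c | c. c \<noteq> 0} = norm v"
proof (rule cSup_eq_maximum)
  show "z \<le> norm v" if "z \<in> {norm (hinner cj v c) / norm c | c. c \<noteq> 0}" for z
    using that norm_hinner_le[of v] by (auto simp: divide_le_eq)
  show "norm v \<in> {norm (hinner cj v c) / norm c | c. c \<noteq> 0}"
  proof (cases "v = 0")
    case True
    then show ?thesis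
      by (intro CollectI exI[of _ 1]) (simp add: vec_eq_iff hinner_def)
  next
    case False
    then show ?thesis
      by (intro CollectI exI[of _ v]) (simp add: hinner_self norm_mult power2_eq_square)
  qed
qed

lemma normU_smult: "normU cj R (a *s x) = norm a * normU cj R x"
  by (simp add: normU_def innerU_def vector_scalar_commute hinner_smult norm_mult
      norm_power real_sqrt_mult)

lemma normU_pos:
  assumes "self_adjoint_pd cj R" and "x \<noteq> 0"
  shows "normU cj R x > 0"
  using assms by (auto simp: self_adjoint_pd_def normU_def innerU_def)

lemma continuous_on_normU: "continuous_on S (normU cj R)"
  unfolding normU_def innerU_def hinner_def matrix_vector_mult_def
  by (intro continuous_intros continuous_on_compose2[OF continuous_on_cj]) auto

lemma normU_lower_bound:
  assumes pd: "self_adjoint_pd cj R"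
  shows "\<exists>m>0. \<forall>x. m * norm x \<le> normU cj R x"
proof -
  have "sphere (0::'k^'n) 1 \<noteq> {}"
    using vector_choose_size[of 1] by auto
  then obtain z0 where z0: "z0 \<in> sphere 0 1" "\<And>z. z \<in> sphere 0 1 \<Longrightarrow> normU cj R z0 \<le> normU cj R z"
    using continuous_attains_inf[OF compact_sphere _ continuous_on_normU] by blast
  have "normU cj R z0 * norm x \<le> normU cj R x" for x
  proof (cases "x = 0")
    case False
    define a :: 'k where "a = of_real (norm x)"
    have x: "x = a *s (inverse a *s x)"
      using False by (simp add: a_def vector_smult_assoc)
    have "inverse a *s x = inverse (norm x) *\<^sub>R x"
      by (simp add: a_def vec_eq_iff) (simp add: scaleR_conv_of_real of_real_inverse)
    then have "inverse a *s x \<in> sphere 0 1"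
      using False by simp
    then have "normU cj R z0 \<le> normU cj R (inverse a *s x)"
      by (rule z0(2))
    moreover have "normU cj R x = norm x * normU cj R (inverse a *s x)"
      by (metis normU_smult x a_def norm_of_real abs_norm_cancel)
    ultimately show ?thesis
      by (simp add: mult.commute mult_left_mono)
  qed simp
  moreover have "normU cj R z0 > 0"
    using z0(1) by (intro normU_pos[OF pd]) auto
  ultimately show ?thesis
    by blast
qed

context
  fixes R :: "'k^'n^'n" and Ur :: "'k^'r^'n"
  assumes orth: "\<forall>i j. innerU cj R (column i Ur) (column j Ur) = (if i = j then 1 else 0)"
begin

lemma gram_matrix_eq_mat_1: "hadj cj Ur ** (R ** Ur) = mat 1"
proof -
  have "(hadj cj Ur ** (R ** Ur)) $ j $ i = cj (innerU cj R (column i Ur) (column j Ur))" for i j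
    by (simp add: matrix_matrix_mult_def matrix_vector_mult_def hadj_def innerU_def hinner_def
        column_def cj_sum cj_mult mult_ac)
  then show ?thesis
    by (simp add: vec_eq_iff mat_def orth)
qed

lemma innerU_orthonormal: "innerU cj R (Ur *v c) (Ur *v d) = hinner cj c d"
  by (simp add: innerU_def hinner_matrix_right matrix_vector_mul_assoc gram_matrix_eq_mat_1)

lemma normU_orthonormal: "normU cj R (Ur *v c) = norm c"
  by (simp add: normU_def innerU_orthonormal hinner_self norm_power)

lemma ratio_set_col_space:
  assumes inj: "\<forall>c. Ur *v c = 0 \<longrightarrow> c = 0"
  shows "{f x / normU cj R x | x. x \<in> col_space Ur \<and> x \<noteq> 0} = {f (Ur *v c) / norm c | c. c \<noteq> 0}"
  using inj unfolding col_space_def by (force simp: normU_orthonormal)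

lemma dual_norm_orthonormal:
  assumes inj: "\<forall>c. Ur *v c = 0 \<longrightarrow> c = 0"
  shows "dual_norm cj R Ur y = norm (hadj cj Ur *v y)"
  using ratio_set_col_space[OF inj, of "\<lambda>w. norm (hinner cj y w)"]
  by (simp add: dual_norm_def hinner_matrix_right Sup_norm_hinner_ratio)

lemma alpha_r_eq_sigma_min:
  assumes inj: "\<forall>c. Ur *v c = 0 \<longrightarrow> c = 0"
  shows "alpha_r cj R Ur A = sigma_min (hadj cj Ur ** A ** Ur)"
  using ratio_set_col_space[OF inj, of "\<lambda>x. dual_norm cj R Ur (A *v x)"]
  by (simp add: alpha_r_def sigma_min_def dual_norm_orthonormal[OF inj] matrix_vector_mul_assoc
      matrix_mul_assoc)

lemma bdd_above_dual_norm_ratio: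
  assumes pd: "self_adjoint_pd cj R" and inj: "\<forall>c. Ur *v c = 0 \<longrightarrow> c = 0"
  shows "bdd_above (range (\<lambda>x. dual_norm cj R Ur (A *v x) / normU cj R x))"
proof -
  obtain m where m: "m > 0" "\<And>x. m * norm x \<le> normU cj R x"
    using normU_lower_bound[OF pd] by blast
  obtain K where K: "K > 0" "\<And>x. norm ((hadj cj Ur ** A) *v x) \<le> norm x * K"
    using bounded_linear.pos_bounded[OF matrix_vector_mul_bounded_linear] by blast
  have "dual_norm cj R Ur (A *v x) / normU cj R x \<le> K / m" for x
  proof (cases "x = 0")
    case False
    then have "normU cj R x > 0"
      by (rule normU_pos[OF pd])
    have "m * dual_norm cj R Ur (A *v x) \<le> m * (norm x * K)"
      using K(2)[of x] m(1) by (simp add: dual_norm_orthonormal[OF inj] matrix_vector_mul_assoc)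
    also have "\<dots> \<le> K * normU cj R x"
      using mult_left_mono[OF m(2)[of x], of K] K(1) by (simp add: mult_ac)
    finally show ?thesis
      using \<open>normU cj R x > 0\<close> m(1) by (simp add: field_simps)
  qed (use K m in simp)
  then show ?thesis
    by (intro bdd_aboveI2)
qed

lemma sigma_max_le_beta_r:
  assumes pd: "self_adjoint_pd cj R" and inj: "\<forall>c. Ur *v c = 0 \<longrightarrow> c = 0"
  shows "sigma_max (hadj cj Ur ** A ** Ur) \<le> beta_r cj R Ur A u"
proof -
  let ?ratio = "\<lambda>x. dual_norm cj R Ur (A *v x) / normU cj R x"
  have "sigma_max (hadj cj Ur ** A ** Ur) = Sup {?ratio x | x. x \<in> col_space Ur \<and> x \<noteq> 0}"
    using ratio_set_col_space[OF inj, of "\<lambda>x. dual_norm cj R Ur (A *v x)"]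
    by (simp add: sigma_max_def dual_norm_orthonormal[OF inj] matrix_vector_mul_assoc
        matrix_mul_assoc)
  also have "\<dots> \<le> beta_r cj R Ur A u"
    unfolding beta_r_def
  proof (rule cSup_subset_mono)
    have "(1::'k^'r) \<noteq> 0"
      by (simp add: vec_eq_iff)
    then show "{?ratio x | x. x \<in> col_space Ur \<and> x \<noteq> 0} \<noteq> {}"
      using inj unfolding col_space_def by blast
    show "bdd_above {?ratio x | x. x \<in> {t *s u + w | t w. w \<in> col_space Ur} \<and> x \<noteq> 0}"
      by (rule bdd_above_mono[OF bdd_above_dual_norm_ratio[OF pd inj]]) auto
    show "{?ratio x | x. x \<in> col_space Ur \<and> x \<noteq> 0}
        \<subseteq> {?ratio x | x. x \<in> {t *s u + w | t w. w \<in> col_space Ur} \<and> x \<noteq> 0}"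
      by (force intro: exI[of _ 0])
  qed
  finally show ?thesis .
qed

end

theorem cond_number_le_beta_r_div_alpha_r:
  assumes pd: "self_adjoint_pd cj R"
    and inj: "\<forall>c. Ur *v c = 0 \<longrightarrow> c = 0"
    and orth: "\<forall>i j. innerU cj R (column i Ur) (column j Ur) = (if i = j then 1 else 0)"
  shows "cond_number (hadj cj Ur ** A ** Ur) \<le> beta_r cj R Ur A u / alpha_r cj R Ur A"
  unfolding cond_number_def alpha_r_eq_sigma_min[OF orth inj]
  using sigma_max_le_beta_r[OF orth pd inj] sigma_min_nonneg by (rule divide_right_mono)

end

interpretation complex_conjugation: conjugation cnj
  by unfold_locales (simp_all add: complex_norm_square mult.commute flip: of_real_power)

interpretation real_conjugation: conjugation "id :: real \<Rightarrow> real"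
  by unfold_locales (simp_all add: power2_eq_square)

theorem proposition2p2:
  shows
  "(\<forall>(R::complex^'n^'n) (A::complex^'n^'n) (u::complex^'n) (Ur::complex^'r^'n).
      self_adjoint_pd cnj R \<longrightarrow>
      (\<forall>c. Ur *v c = 0 \<longrightarrow> c = 0) \<longrightarrow>
      (\<forall>i j. innerU cnj R (column i Ur) (column j Ur) = (if i = j then 1 else 0)) \<longrightarrow>
      cond_number (hadj cnj Ur ** A ** Ur) \<le> beta_r cnj R Ur A u / alpha_r cnj R Ur A)
 \<and> (\<forall>(R::real^'n^'n) (A::real^'n^'n) (u::real^'n) (Ur::real^'r^'n).
      self_adjoint_pd id R \<longrightarrow>
      (\<forall>c. Ur *v c = 0 \<longrightarrow> c = 0) \<longrightarrow>
      (\<forall>i j. innerU id R (column i Ur) (column j Ur) = (if i = j then 1 else 0)) \<longrightarrow>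
      cond_number (hadj id Ur ** A ** Ur) \<le> beta_r id R Ur A u / alpha_r id R Ur A)"
  using complex_conjugation.cond_number_le_beta_r_div_alpha_r
    real_conjugation.cond_number_le_beta_r_div_alpha_r
  by blast

end
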